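(* Let $p$ be a prime, let $\Gamma$ be an abelian $p$-group of rank $r$ (written multiplicatively), and suppose that $X\subset\Gamma$ is a union of subgroups of $\Gamma$. Then $\langle X\rangle\subset X^r$.
   Context: The rank of a group is the minimal cardinality of a generating set. $X^r=\{x_1\cdots x_r:x_i\in X\}$ and $\langle X\rangle$ is the subgroup generated by $X$. *)

theory Defs
  imports "HOL-Algebra.Algebra"
begin

definition group_rank :: "('a, 'b) monoid_scheme \<Rightarrow> nat" where
  "group_rank G = (LEAST n. \<exists>S. S \<subseteq> carrier G \<and> finite S \<and> card S = n
                                  \<and> generate G S = carrier G)"

primrec set_power :: "('a, 'b) monoid_scheme \<Rightarrow> 'a set \<Rightarrow> nat \<Rightarrow> 'a set" where
  "set_power M Y 0 = {one M}"
| "set_power M Y (Suc n) = set_mult M (set_power M Y n) Y"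

end

theory Submission
  imports Defs
begin

text \<open>Let \<open>H = \<langle>X\<rangle>\<close> and pick \<open>S \<subseteq> X\<close> of least size with \<open>H = \<langle>S\<rangle> H\<^sup>p\<close>. By the
  Burnside basis argument \<open>\<langle>S\<rangle> = H\<close>, and by minimality \<open>S\<close> is independent modulo \<open>H\<^sup>p\<close>,
  so \<open>p\<^bsup>|S|\<^esup> \<le> |H : H\<^sup>p| = |H[p]| \<le> |\<Gamma>[p]|\<close>. Comparing \<open>|\<Gamma>| = |\<Gamma>[p]| |\<Gamma>\<^sup>p|\<close> with
  \<open>|\<langle>T \<union> \<Gamma>\<^sup>p\<rangle>| \<le> p\<^bsup>|T|\<^esup> |\<Gamma>\<^sup>p|\<close> for a generating set \<open>T\<close> of size \<open>r\<close> gives \<open>|\<Gamma>[p]| \<le> p\<^sup>r\<close>,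
  hence \<open>|S| \<le> r\<close>. Since \<open>X\<close> is a union of subgroups, it contains \<open>\<langle>g\<rangle>\<close> for every
  \<open>g \<in> X\<close>; so \<open>H = \<langle>S\<rangle>\<close>, the product of the cyclic groups \<open>\<langle>g\<rangle>\<close> with \<open>g \<in> S\<close>, lies in
  \<open>X\<^bsup>|S|\<^esup>\<close>, which is contained in \<open>X\<^sup>r\<close> because \<open>1 \<in> X\<close>.\<close>

lemma card_eq_card_fibre_mult_card_image:
  assumes "finite A" and fibres: "\<And>y. y \<in> f ` A \<Longrightarrow> card {x \<in> A. f x = y} = k"
  shows "card A = k * card (f ` A)"
proof -
  have "A = (\<Union>y\<in>f ` A. {x \<in> A. f x = y})" by auto
  also have "card \<dots> = (\<Sum>y\<in>f ` A. card {x \<in> A. f x = y})"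
    using assms(1) by (subst card_UN_disjoint) auto
  also have "\<dots> = k * card (f ` A)" using fibres by simp
  finally show ?thesis .
qed

context group
begin

lemma generate_subgroup_eq: "subgroup K G \<Longrightarrow> generate G K = K"
  using generate_subgroup_incl[OF subset_refl] generate.incl[of _ K G] by blast

lemma generating_set_of_card_group_rank:
  assumes "finite (carrier G)"
  obtains S where "S \<subseteq> carrier G" "finite S" "card S = group_rank G" "generate G S = carrier G"
proof -
  let ?gen = "\<lambda>n. \<exists>S. S \<subseteq> carrier G \<and> finite S \<and> card S = n \<and> generate G S = carrier G"
  have "?gen (card (carrier G))" using assms generate_subgroup_eq[OF subgroup_self] by blast
  then have "?gen (group_rank G)" unfolding group_rank_def by (rule LeastI)
  then show ?thesis using that by blast
qed

lemma finite_carrier_if_order_prime_power: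
  "Factorial_Ring.prime p \<Longrightarrow> order G = p ^ n \<Longrightarrow> finite (carrier G)"
  using prime_gt_0_nat unfolding order_def by (simp add: card_ge_0_finite)

lemma card_subgroup_prime_power:
  assumes p: "Factorial_Ring.prime p" and ord: "order G = p ^ n" and H: "subgroup H G"
  obtains i where "card H = p ^ i"
proof -
  have "card H dvd order G" using lagrange[OF H] by (metis dvd_triv_right)
  then show ?thesis using that divides_primepow_nat[OF p] ord by auto
qed

lemma card_subgroup_psubset_ge:
  assumes p: "Factorial_Ring.prime p" and ord: "order G = p ^ n"
    and M: "subgroup M G" and M': "subgroup M' G" and MM': "M \<subset> M'"
  shows "p * card M \<le> card M'"
proof -
  have p1: "1 < p" using prime_gt_1_nat[OF p] .
  have "card M < card M'"
    using finite_carrier_if_order_prime_power[OF p ord]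
      psubset_card_mono[OF finite_subset[OF subgroup.subset[OF M']] MM'] by blast
  moreover obtain i j where "card M = p ^ i" "card M' = p ^ j"
    using card_subgroup_prime_power[OF p ord] M M' by metis
  ultimately show ?thesis using p1 power_increasing[of "Suc i" j p] by simp
qed

lemma set_power_carrier: "A \<subseteq> carrier G \<Longrightarrow> set_power G A k \<subseteq> carrier G"
  by (induction k) (simp_all add: setmult_subset_G)

lemma set_power_mono:
  assumes A: "A \<subseteq> carrier G" "\<one> \<in> A" and kl: "k \<le> l"
  shows "set_power G A k \<subseteq> set_power G A l"
  using kl
proof (induction l rule: dec_induct)
  case (step l)
  have "x \<otimes> \<one> \<in> set_power G A (Suc l)" if "x \<in> set_power G A l" for x
    using that A(2) by (auto simp: set_mult_def)
  moreover have "x \<otimes> \<one> = x" if "x \<in> set_power G A l" for x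
    using that set_power_carrier[OF A(1)] by (metis r_one subsetD)
  ultimately show ?case using step.IH by auto
qed simp

end

context comm_group
begin

lemma subgroup_nat_pow_closed: "subgroup K G \<Longrightarrow> x \<in> K \<Longrightarrow> x [^] (n::nat) \<in> K"
  using subgroup_int_pow_closed[of K x "int n"] by (simp add: int_pow_int)

lemma subgroup_nat_pow_image:
  assumes K: "subgroup K G" shows "subgroup ((\<lambda>x. x [^] (n::nat)) ` K) G"
proof -
  have Kc: "K \<subseteq> carrier G" using subgroup.subset[OF K] .
  show ?thesis
  proof (rule subgroupI)
    show "(\<lambda>x. x [^] n) ` K \<subseteq> carrier G" using Kc by auto
    show "(\<lambda>x. x [^] n) ` K \<noteq> {}" using subgroup.one_closed[OF K] by blast
    show "inv a \<in> (\<lambda>x. x [^] n) ` K" if "a \<in> (\<lambda>x. x [^] n) ` K" for a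
      using that Kc subgroup.m_inv_closed[OF K] by (force simp: nat_pow_inv)
    show "a \<otimes> b \<in> (\<lambda>x. x [^] n) ` K"
      if ab: "a \<in> (\<lambda>x. x [^] n) ` K" "b \<in> (\<lambda>x. x [^] n) ` K" for a b
    proof -
      obtain x y where "x \<in> K" "y \<in> K" "a = x [^] n" "b = y [^] n" using ab by blast
      moreover have "x [^] n \<otimes> y [^] n = (x \<otimes> y) [^] n"
        using calculation Kc by (simp add: nat_pow_distrib subsetD)
      ultimately show ?thesis using subgroup.m_closed[OF K] by auto
    qed
  qed
qed

lemma generate_Un_subgroup_subset:
  assumes "A \<subseteq> carrier G" "subgroup Q G"
  shows "generate G (A \<union> Q) \<subseteq> generate G A <#> Q"
proof (rule generate_subgroup_incl)
  show "subgroup (generate G A <#> Q) G"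
    by (rule mult_subgroups[OF generate_is_subgroup[OF assms(1)] assms(2)])
  have "x \<otimes> \<one> \<in> generate G A <#> Q" if "x \<in> A" for x
    using that generate.incl[of x A G] subgroup.one_closed[OF assms(2)]
    unfolding set_mult_def by blast
  moreover have "\<one> \<otimes> x \<in> generate G A <#> Q" if "x \<in> Q" for x
    using that generate.one by (auto simp: set_mult_def)
  ultimately show "A \<union> Q \<subseteq> generate G A <#> Q"
    using assms subgroup.subset[OF assms(2)] by (force simp: subset_iff)
qed

lemma card_subgroup_eq_card_kernel_mult_card_nat_pow_image:
  assumes K: "subgroup K G" and fin: "finite K"
  shows "card K = card {x \<in> K. x [^] (n::nat) = \<one>} * card ((\<lambda>x. x [^] n) ` K)"
proof (rule card_eq_card_fibre_mult_card_image[OF fin])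
  let ?Z = "{x \<in> K. x [^] n = \<one>}"
  have Kc: "K \<subseteq> carrier G" using subgroup.subset[OF K] .
  fix w assume "w \<in> (\<lambda>x. x [^] n) ` K"
  then obtain y where y: "y \<in> K" "w = y [^] n" by blast
  have yc: "y \<in> carrier G" using y(1) Kc by blast
  have "{x \<in> K. x [^] n = w} = (\<lambda>z. y \<otimes> z) ` ?Z"
  proof (intro equalityI subsetI)
    fix x assume x: "x \<in> {x \<in> K. x [^] n = w}"
    have xc: "x \<in> carrier G" using x Kc by blast
    have "(inv y \<otimes> x) [^] n = inv (y [^] n) \<otimes> y [^] n"
      using xc yc x y(2) by (simp add: nat_pow_distrib nat_pow_inv)
    also have "\<dots> = \<one>" using yc by simp
    finally have "inv y \<otimes> x \<in> ?Z"
      using subgroup.m_closed[OF K subgroup.m_inv_closed[OF K y(1)]] x by blast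
    moreover have "x = y \<otimes> (inv y \<otimes> x)" using xc yc by (simp add: m_assoc[symmetric])
    ultimately show "x \<in> (\<lambda>z. y \<otimes> z) ` ?Z" by (intro image_eqI)
  next
    fix x assume "x \<in> (\<lambda>z. y \<otimes> z) ` ?Z"
    then obtain z where z: "z \<in> ?Z" "x = y \<otimes> z" by blast
    have "z \<in> carrier G" using z(1) Kc by blast
    then have "x [^] n = w" using z y yc by (simp add: nat_pow_distrib)
    then show "x \<in> {x \<in> K. x [^] n = w}" using z y subgroup.m_closed[OF K] by blast
  qed
  moreover have "inj_on (\<lambda>z. y \<otimes> z) ?Z"
    by (rule inj_on_subset[OF inj_on_cmult[OF yc]]) (use Kc in blast)
  then have "card ((\<lambda>z. y \<otimes> z) ` ?Z) = card ?Z" by (rule card_image)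
  ultimately show "card {x \<in> K. x [^] n = w} = card ?Z" by simp
qed

lemma subgroup_subset_if_subset_set_mult_nat_pow_image:
  assumes H: "subgroup H G" and K: "subgroup K G"
    and spans: "H \<subseteq> K <#> (\<lambda>x. x [^] (p::nat)) ` H"
    and exponent: "\<forall>x\<in>H. x [^] (p ^ m) = \<one>"
  shows "H \<subseteq> K"
proof -
  have Hc: "H \<subseteq> carrier G" and Kc: "K \<subseteq> carrier G"
    using subgroup.subset[OF H] subgroup.subset[OF K] .
  let ?P = "\<lambda>j. (\<lambda>x. x [^] (p ^ j)) ` H"
  have Pc: "?P j \<subseteq> carrier G" for j using Hc by auto
  \<comment> \<open>Raising \<open>spans\<close> to the power \<open>p\<^sup>j\<close> and iterating gives \<open>H \<subseteq> K H\<^bsup>p\<^sup>j\<^esup>\<close>;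
    for \<open>j = m\<close> the second factor is trivial.\<close>
  have refine: "?P j \<subseteq> K <#> ?P (Suc j)" for j
  proof
    fix w assume "w \<in> ?P j"
    then obtain h where h: "h \<in> H" "w = h [^] (p ^ j)" by blast
    then obtain k u where ku: "k \<in> K" "u \<in> H" "h = k \<otimes> u [^] p"
      using spans unfolding set_mult_def by blast
    then have "w = k [^] (p ^ j) \<otimes> u [^] (p ^ Suc j)"
      using h(2) Kc Hc by (simp add: nat_pow_distrib nat_pow_pow subsetD mult.commute)
    then show "w \<in> K <#> ?P (Suc j)"
      using subgroup_nat_pow_closed[OF K ku(1)] ku(2) unfolding set_mult_def by blast
  qed
  have cover: "H \<subseteq> K <#> ?P j" for j
  proof (induction j)
    case 0
    have "h = \<one> \<otimes> h [^] (p ^ 0)" if "h \<in> H" for h using that Hc by auto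
    then show ?case using subgroup.one_closed[OF K] unfolding set_mult_def by blast
  next
    case (Suc j)
    have "K <#> ?P j \<subseteq> K <#> (K <#> ?P (Suc j))" by (rule mono_set_mult[OF subset_refl refine])
    also have "\<dots> = K <#> ?P (Suc j)"
      using set_mult_assoc[OF Kc Kc Pc[of "Suc j"]] subgroup_mult_id[OF K] by simp
    finally show ?case using Suc.IH by blast
  qed
  have "?P m \<subseteq> {\<one>}" using exponent by blast
  then have "K <#> ?P m \<subseteq> K <#> {\<one>}" by (rule mono_set_mult[OF subset_refl])
  also have "\<dots> = K" using coset_mult_one[OF Kc] r_coset_eq_set_mult[of G K \<one>] by simp
  finally show ?thesis using cover[of m] by blast
qed

lemma card_generate_insert_le:
  assumes fin: "finite M" and M: "subgroup M G" and g: "g \<in> carrier G"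
    and p: "0 < p" and gp: "g [^] (p::nat) \<in> M"
  shows "card (generate G (insert g M)) \<le> p * card M"
proof -
  have Mc: "M \<subseteq> carrier G" using subgroup.subset[OF M] .
  have "generate G (insert g M) \<subseteq> generate G {g} <#> M"
    using generate_Un_subgroup_subset[of "{g}" M] g M by simp
  also have "\<dots> \<subseteq> (\<lambda>(i, m). g [^] i \<otimes> m) ` ({..<p} \<times> M)"
  proof
    fix x assume "x \<in> generate G {g} <#> M"
    then obtain a m where a: "a \<in> generate G {g}" and m: "m \<in> M" and x: "x = a \<otimes> m"
      unfolding set_mult_def by blast
    obtain k :: int where k: "a = g [^] k" using a generate_pow[OF g] by blast
    define i where "i = nat (k mod int p)"
    define q where "q = k div int p"
    have "k = int i + int p * q" using p by (simp add: i_def q_def)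
    then have "g [^] k = g [^] i \<otimes> g [^] (int p * q)"
      using g by (simp add: int_pow_mult int_pow_int)
    also have "g [^] (int p * q) = (g [^] p) [^] q"
      using int_pow_pow[OF g, of "int p" q] by (simp add: int_pow_int)
    finally have "g [^] k = g [^] i \<otimes> (g [^] p) [^] q" .
    then have "x = g [^] i \<otimes> ((g [^] p) [^] q \<otimes> m)"
      using x k g m Mc by (simp add: m_assoc subsetD)
    moreover have "(g [^] p) [^] q \<otimes> m \<in> M"
      using subgroup.m_closed[OF M subgroup_int_pow_closed[OF M gp] m] .
    moreover have "i < p" using p by (simp add: i_def nat_less_iff)
    ultimately show "x \<in> (\<lambda>(i, m). g [^] i \<otimes> m) ` ({..<p} \<times> M)" by force
  qed
  finally have "card (generate G (insert g M)) \<le> card ((\<lambda>(i, m). g [^] i \<otimes> m) ` ({..<p} \<times> M))"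
    by (rule card_mono[rotated]) (use fin in simp)
  also have "\<dots> \<le> card ({..<p} \<times> M)"
    by (rule card_image_le) (use fin in simp)
  also have "\<dots> = p * card M" by (simp add: card_cartesian_product)
  finally show ?thesis .
qed

lemma card_generate_Un_le:
  assumes fin: "finite (carrier G)" and Q: "subgroup Q G" and p: "0 < p"
    and S: "finite S" "S \<subseteq> carrier G" and powers: "\<forall>g\<in>S. g [^] (p::nat) \<in> Q"
  shows "card (generate G (S \<union> Q)) \<le> p ^ card S * card Q"
  using S powers
proof (induction S rule: finite_induct)
  case empty
  then show ?case using generate_subgroup_eq[OF Q] by simp
next
  case (insert g F)
  let ?M = "generate G (F \<union> Q)"
  have FQ: "F \<union> Q \<subseteq> carrier G" using insert.prems subgroup.subset[OF Q] by auto
  have M: "subgroup ?M G" by (rule generate_is_subgroup[OF FQ])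
  have finM: "finite ?M" using finite_subset[OF generate_incl[OF FQ] fin] .
  have g: "g \<in> carrier G" using insert.prems by blast
  have "insert g F \<union> Q \<subseteq> insert g ?M" using generate.incl[of _ "F \<union> Q" G] by blast
  then have "generate G (insert g F \<union> Q) \<subseteq> generate G (insert g ?M)" by (rule mono_generate)
  moreover have "finite (generate G (insert g ?M))"
    using finite_subset[OF generate_incl fin] g subgroup.subset[OF M] by blast
  ultimately have "card (generate G (insert g F \<union> Q)) \<le> card (generate G (insert g ?M))"
    by (rule card_mono[rotated])
  also have "\<dots> \<le> p * card ?M"
    using card_generate_insert_le[OF finM M g p] insert.prems generate.incl[of _ "F \<union> Q" G]
    by blast
  also have "\<dots> \<le> p * (p ^ card F * card Q)" using insert.IH insert.prems by simp
  finally show ?case using insert.hyps by simp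
qed

lemma card_nat_pow_kernel_le_pow_group_rank:
  assumes fin: "finite (carrier G)" and p: "0 < p"
  shows "card {x \<in> carrier G. x [^] (p::nat) = \<one>} \<le> p ^ group_rank G"
proof -
  obtain S where S: "S \<subseteq> carrier G" "finite S" "card S = group_rank G" "generate G S = carrier G"
    using generating_set_of_card_group_rank[OF fin] .
  let ?P = "(\<lambda>x. x [^] p) ` carrier G"
  have "card {x \<in> carrier G. x [^] p = \<one>} * card ?P = card (carrier G)"
    using card_subgroup_eq_card_kernel_mult_card_nat_pow_image[OF subgroup_self fin] by simp
  also have "\<dots> = card (generate G (S \<union> ?P))"
  proof -
    have "S \<union> ?P \<subseteq> carrier G" using S(1) by auto
    then have "generate G (S \<union> ?P) = carrier G"
      using S(4) mono_generate[of S "S \<union> ?P"] generate_incl by blast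
    then show ?thesis by simp
  qed
  also have "\<dots> \<le> p ^ card S * card ?P"
    by (rule card_generate_Un_le[OF fin subgroup_nat_pow_image[OF subgroup_self] p S(2,1)])
      (use S(1) in blast)
  finally have "card {x \<in> carrier G. x [^] p = \<one>} * card ?P \<le> p ^ group_rank G * card ?P"
    using S(3) by simp
  moreover have "0 < card ?P" using fin by (auto simp: card_gt_0_iff)
  ultimately show ?thesis by simp
qed

lemma card_generate_Un_ge:
  assumes p: "Factorial_Ring.prime p" and ord: "order G = p ^ n" and Q: "subgroup Q G"
    and S: "finite S" "S \<subseteq> carrier G"
    and independent: "\<forall>g\<in>S. g \<notin> generate G ((S - {g}) \<union> Q)"
  shows "p ^ card S * card Q \<le> card (generate G (S \<union> Q))"
proof -
  have "p ^ card T * card Q \<le> card (generate G (T \<union> Q))" if "finite T" "T \<subseteq> S" for T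
    using that
  proof (induction T rule: finite_subset_induct')
    case empty
    then show ?case using generate_subgroup_eq[OF Q] by simp
  next
    case (insert g F)
    let ?M = "generate G (F \<union> Q)" and ?M' = "generate G (insert g F \<union> Q)"
    have carr: "F \<union> Q \<subseteq> carrier G" "insert g F \<union> Q \<subseteq> carrier G"
      using insert.hyps S(2) subgroup.subset[OF Q] by auto
    have "F \<union> Q \<subseteq> (S - {g}) \<union> Q" using insert.hyps by blast
    then have "g \<notin> ?M" using mono_generate independent insert.hyps by blast
    moreover have "g \<in> ?M'" by (rule generate.incl) simp
    moreover have "?M \<subseteq> ?M'" by (rule mono_generate) blast
    ultimately have "?M \<subset> ?M'" by blast
    then have "p * card ?M \<le> card ?M'"
      using card_subgroup_psubset_ge[OF p ord] generate_is_subgroup carr by blast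
    then show ?case using insert.IH insert.hyps
      by (simp add: mult.assoc) (meson le_trans mult_le_mono2)
  qed
  from this[OF S(1) subset_refl] show ?thesis .
qed

lemma pow_card_le_card_nat_pow_kernel:
  assumes p: "Factorial_Ring.prime p" and ord: "order G = p ^ n" and H: "subgroup H G"
    and S: "finite S" "S \<subseteq> H"
    and independent: "\<forall>g\<in>S. g \<notin> generate G ((S - {g}) \<union> (\<lambda>x. x [^] p) ` H)"
  shows "p ^ card S \<le> card {x \<in> H. x [^] p = \<one>}"
proof -
  let ?P = "(\<lambda>x. x [^] p) ` H"
  have Hc: "H \<subseteq> carrier G" using subgroup.subset[OF H] .
  have finH: "finite H" using finite_subset[OF Hc finite_carrier_if_order_prime_power[OF p ord]] .
  have "p ^ card S * card ?P \<le> card (generate G (S \<union> ?P))"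
    using card_generate_Un_ge[OF p ord subgroup_nat_pow_image[OF H] S(1)] S(2) Hc independent
    by blast
  also have "\<dots> \<le> card H"
    using generate_subgroup_incl[OF _ H, of "S \<union> ?P"] S(2) subgroup_nat_pow_closed[OF H] finH
    by (intro card_mono) auto
  also have "\<dots> = card {x \<in> H. x [^] p = \<one>} * card ?P"
    by (rule card_subgroup_eq_card_kernel_mult_card_nat_pow_image[OF H finH])
  moreover have "0 < card ?P" using finH subgroup.one_closed[OF H] by (auto simp: card_gt_0_iff)
  ultimately show ?thesis by simp
qed

lemma generating_subset_pow_card_le_card_nat_pow_kernel:
  assumes p: "Factorial_Ring.prime p" and ord: "order G = p ^ n" and A: "A \<subseteq> carrier G"
  obtains S where "S \<subseteq> A" "finite S" "generate G S = generate G A"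
    "p ^ card S \<le> card {x \<in> carrier G. x [^] p = \<one>}"
proof -
  define H where "H = generate G A"
  let ?P = "(\<lambda>x. x [^] p) ` H"
  have fin: "finite (carrier G)" using finite_carrier_if_order_prime_power[OF p ord] .
  have H: "subgroup H G" unfolding H_def by (rule generate_is_subgroup[OF A])
  have Hc: "H \<subseteq> carrier G" using subgroup.subset[OF H] .
  have P: "subgroup ?P G" by (rule subgroup_nat_pow_image[OF H])
  let ?spans = "\<lambda>S. S \<subseteq> A \<and> H \<subseteq> generate G S <#> ?P"
  have "h = h \<otimes> \<one> [^] p" if "h \<in> H" for h using that Hc by auto
  then have "?spans A" using subgroup.one_closed[OF H] unfolding H_def set_mult_def by blast
  then obtain S where S: "S \<subseteq> A" "H \<subseteq> generate G S <#> ?P"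
    and minimal: "\<And>S'. ?spans S' \<Longrightarrow> card S \<le> card S'"
    using ex_has_least_nat[of ?spans A card] by blast
  have finS: "finite S" using finite_subset[OF S(1) finite_subset[OF A fin]] .
  have Sc: "S \<subseteq> carrier G" using S(1) A by (rule subset_trans)
  have "H \<subseteq> generate G S"
  proof (rule subgroup_subset_if_subset_set_mult_nat_pow_image[OF H generate_is_subgroup[OF Sc] S(2)])
    show "\<forall>x\<in>H. x [^] (p ^ n) = \<one>" using Hc pow_order_eq_1 ord by (metis subsetD)
  qed
  moreover have "generate G S \<subseteq> H" unfolding H_def using S(1) by (rule mono_generate)
  ultimately have gen: "generate G S = H" by blast
  have "\<forall>g\<in>S. g \<notin> generate G ((S - {g}) \<union> ?P)"
  proof (intro ballI notI)
    fix g assume g: "g \<in> S" and "g \<in> generate G ((S - {g}) \<union> ?P)"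
    let ?M = "generate G ((S - {g}) \<union> ?P)"
    have "(S - {g}) \<union> ?P \<subseteq> carrier G" using Sc subgroup.subset[OF P] by blast
    then have M: "subgroup ?M G" by (rule generate_is_subgroup)
    have "S \<subseteq> ?M" using \<open>g \<in> ?M\<close> generate.incl[of _ "(S - {g}) \<union> ?P" G] by blast
    then have "generate G S \<subseteq> ?M" by (rule generate_subgroup_incl[OF _ M])
    then have "H \<subseteq> ?M" by (simp only: gen)
    also have "?M \<subseteq> generate G (S - {g}) <#> ?P"
      by (rule generate_Un_subgroup_subset[OF _ P]) (use Sc in blast)
    finally have "card S \<le> card (S - {g})" using minimal S(1) by blast
    then show False using card_Diff1_less[OF finS g] by simp
  qed
  then have "p ^ card S \<le> card {x \<in> H. x [^] p = \<one>}"
    using pow_card_le_card_nat_pow_kernel[OF p ord H finS] gen generate.incl[of _ S G] by blast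
  also have "\<dots> \<le> card {x \<in> carrier G. x [^] p = \<one>}"
    using Hc fin by (intro card_mono) auto
  finally show ?thesis using that[OF S(1) finS] gen unfolding H_def by blast
qed

lemma generate_subset_set_power:
  assumes A: "A \<subseteq> carrier G" and cyclic: "\<forall>g\<in>A. generate G {g} \<subseteq> A"
    and S: "finite S" "S \<subseteq> A"
  shows "generate G S \<subseteq> set_power G A (card S)"
  using S
proof (induction S rule: finite_subset_induct')
  case empty
  then show ?case by (simp add: generate_empty)
next
  case (insert g F)
  have g: "g \<in> carrier G" and F: "F \<subseteq> carrier G" using insert.hyps A by auto
  have "insert g F \<subseteq> F \<union> generate G {g}" using generate.incl[of g "{g}" G] by blast
  then have "generate G (insert g F) \<subseteq> generate G (F \<union> generate G {g})" by (rule mono_generate)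
  also have "\<dots> \<subseteq> generate G F <#> generate G {g}"
    by (rule generate_Un_subgroup_subset[OF F generate_is_subgroup]) (use g in blast)
  also have "\<dots> \<subseteq> set_power G A (card F) <#> A"
    using insert.IH insert.hyps cyclic by (intro mono_set_mult) auto
  finally show ?case using insert.hyps by simp
qed

end

theorem lemma5p5:
  fixes \<Gamma> :: "('a, 'b) monoid_scheme" and p :: nat and A :: "'a set"
    and \<H> :: "'a set set"
  assumes "Factorial_Ring.prime p"
    and "comm_group \<Gamma>"
    and "finite (carrier \<Gamma>)"
    and "\<exists>n. order \<Gamma> = p ^ n"
    and "\<H> \<noteq> {}"
    and "\<forall>H\<in>\<H>. subgroup H \<Gamma>"
    and "A = \<Union>\<H>"
  shows "generate \<Gamma> A \<subseteq> set_power \<Gamma> A (group_rank \<Gamma>)"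
proof -
  interpret comm_group \<Gamma> by (rule assms(2))
  obtain n where ord: "order \<Gamma> = p ^ n" using assms(4) by blast
  have A: "A \<subseteq> carrier \<Gamma>" using assms(6,7) subgroup.subset by blast
  have one: "\<one>\<^bsub>\<Gamma>\<^esub> \<in> A" using assms(5-7) subgroup.one_closed by blast
  have cyclic: "\<forall>g\<in>A. generate \<Gamma> {g} \<subseteq> A"
    using assms(6,7) generate_subgroup_incl[of "{_}"] by blast
  obtain S where S: "S \<subseteq> A" "finite S" "generate \<Gamma> S = generate \<Gamma> A"
    and small: "p ^ card S \<le> card {x \<in> carrier \<Gamma>. x [^]\<^bsub>\<Gamma>\<^esub> p = \<one>\<^bsub>\<Gamma>\<^esub>}"
    using generating_subset_pow_card_le_card_nat_pow_kernel[OF assms(1) ord A] .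
  have "p ^ card S \<le> p ^ group_rank \<Gamma>"
    using small card_nat_pow_kernel_le_pow_group_rank[OF assms(3) prime_gt_0_nat[OF assms(1)]]
    by (rule le_trans)
  then have "card S \<le> group_rank \<Gamma>" by (rule power_le_imp_le_exp[OF prime_gt_1_nat[OF assms(1)]])
  then show ?thesis
    using generate_subset_set_power[OF A cyclic S(2,1)] set_power_mono[OF A one] S(3) by blast
qed

end
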